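(* Let $\triangle ABC$ have side lengths $a=|BC|>b=|CA|>c=|AB|$ and angles $\alpha=\angle A$, $\beta=\angle B$, $\gamma=\angle C$. For $x\in\{a,b,c\}$ let $W_x$ denote the largest area of an equilateral triangle contained in the closed triangle $\triangle ABC$ having one of its sides lying on side $x$. (i) If $60^\circ<\beta<80^\circ<\alpha<90^\circ$, $\alpha/2+\beta<120^\circ$ and $\alpha+\beta/2\ge 120^\circ$, then the minimum of $W_a,W_b,W_c$ is attained on the middle side $b$, and the maximum is attained on both the short side $c$ and the long side $a$ when $\alpha+\beta/2=120^\circ$, and on the long side $a$ when $\alpha+\beta/2>120^\circ$. (ii) If $75^\circ<\beta<90^\circ$, $80^\circ<\alpha<90^\circ$ and $\alpha/2+\beta\ge 120^\circ$, then the maximum of $W_a,W_b,W_c$ is attained on the long side $a$, and the minimum is attained on the short side $c$ when $\alpha/2+\beta>120^\circ$, and on both the short side $c$ and the middle side $b$ when $\alpha/2+\beta=120^\circ$.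
   Context: An equilateral triangle of largest area contained in $\triangle ABC$ with one side lying on a given side of $\triangle ABC$ is called the wedged equilateral triangle (WET) on that side; it need not have all three vertices on the boundary of $\triangle ABC$. The max (resp. min) WET is the one of largest (resp. smallest) area among the three sides. *)

theory Defs
  imports "HOL-Analysis.Analysis"
begin

definition angle_at :: "real^2 \<Rightarrow> real^2 \<Rightarrow> real^2 \<Rightarrow> real" where
  "angle_at P Q R = arccos (((Q - P) \<bullet> (R - P)) / (norm (Q - P) * norm (R - P)))"

definition deg :: "real \<Rightarrow> real" where
  "deg x = x * pi / 180"

definition equilateral :: "real^2 \<Rightarrow> real^2 \<Rightarrow> real^2 \<Rightarrow> bool" where
  "equilateral P Q R \<longleftrightarrow> P \<noteq> Q \<and> dist P Q = dist Q R \<and> dist Q R = dist R P"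

text \<open>Area of an equilateral triangle of side s is sqrt 3 / 4 * s^2.\<close>
definition WET_area :: "real^2 \<Rightarrow> real^2 \<Rightarrow> real^2 \<Rightarrow> real" where
  "WET_area X Y Z = Sup {sqrt 3 / 4 * (dist P Q)\<^sup>2 | P Q R.
      equilateral P Q R \<and> closed_segment P Q \<subseteq> closed_segment X Y \<and>
      convex hull {P, Q, R} \<subseteq> convex hull {X, Y, Z}}"

end

theory Submission
  imports Defs
begin

text \<open>
  Put the side XY on the first axis of an orthonormal frame at X.  An equilateral triangle of
  side s whose base lies on XY has its apex above the midpoint of the base, at height
  sqrt 3 / 2 * s, and it lies in the triangle iff that midpoint is at distance at least
  s * wet_corner_factor (cot V) from each endpoint V of XY.  Hence the WET on XY has side
  |XY| / (wet_corner_factor (cot X) + wet_corner_factor (cot Y)).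

  Under the hypotheses of either part, alpha and beta lie strictly between 60 and 90 degrees,
  so gamma < 60 degrees.  The law of sines then makes the three WET areas proportional to the
  squared sines of alpha, beta and alpha + beta - 60 degrees.  On [0, 180] degrees a larger
  sine means a smaller distance from 90 degrees, so each comparison of areas becomes a linear
  comparison of alpha + 2 beta or 2 alpha + beta with 240 degrees, while a > b gives beta < alpha.
\<close>

section \<open>Trigonometric facts\<close>

lemma eq_pi_minus_if_sin_cos:
  fixes \<theta> \<gamma> :: real
  assumes bounds: "0 < \<theta>" "\<theta> < 2 * pi" "0 < \<gamma>" "\<gamma> < pi"
    and sin_eq: "sin \<theta> = sin \<gamma>" and cos_eq: "cos \<theta> = - cos \<gamma>"
  shows "\<theta> = pi - \<gamma>"
proof -
  have "0 < sin \<theta>"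
    using bounds sin_eq by (simp add: sin_gt_zero)
  have "\<theta> < pi"
  proof (rule ccontr)
    assume "\<not> \<theta> < pi"
    then have "sin \<theta> \<le> 0"
      using bounds sin_lt_zero[of \<theta>] by (cases "\<theta> = pi") simp_all
    with \<open>0 < sin \<theta>\<close> show False
      by simp
  qed
  show ?thesis
    by (rule cos_inj_pi) (use bounds \<open>\<theta> < pi\<close> cos_eq in auto)
qed

lemma sin_eq_cos_dist_pi_half: "sin x = cos \<bar>x - pi / 2\<bar>"
  by (simp add: cos_diff)

lemma sin_less_sin_iff_dist_pi_half:
  assumes "0 \<le> x" "x \<le> pi" "0 \<le> y" "y \<le> pi"
  shows "sin x < sin y \<longleftrightarrow> \<bar>y - pi / 2\<bar> < \<bar>x - pi / 2\<bar>"
proof -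
  have "sin x < sin y \<longleftrightarrow> cos \<bar>x - pi / 2\<bar> < cos \<bar>y - pi / 2\<bar>"
    by (simp only: sin_eq_cos_dist_pi_half)
  also have "\<dots> \<longleftrightarrow> \<bar>y - pi / 2\<bar> < \<bar>x - pi / 2\<bar>"
    using assms by (intro cos_mono_less_eq) auto
  finally show ?thesis .
qed

lemma sin_sq_less_sin_sq_iff:
  assumes "0 \<le> x" "x \<le> pi" "0 \<le> y" "y \<le> pi"
  shows "(sin x)\<^sup>2 < (sin y)\<^sup>2 \<longleftrightarrow> \<bar>y - pi / 2\<bar> < \<bar>x - pi / 2\<bar>"
proof -
  have "(sin x)\<^sup>2 < (sin y)\<^sup>2 \<longleftrightarrow> sin x < sin y"
    using assms sin_ge_zero[of x] sin_ge_zero[of y]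
    by (simp add: power_mono_iff flip: not_le)
  with assms show ?thesis
    by (simp add: sin_less_sin_iff_dist_pi_half)
qed

lemma sin_sq_eq_sin_sq_iff:
  assumes "0 \<le> x" "x \<le> pi" "0 \<le> y" "y \<le> pi"
  shows "(sin x)\<^sup>2 = (sin y)\<^sup>2 \<longleftrightarrow> \<bar>x - pi / 2\<bar> = \<bar>y - pi / 2\<bar>"
  using sin_sq_less_sin_sq_iff[OF assms] sin_sq_less_sin_sq_iff[of y x] assms
  by (metis linorder_neq_iff)

section \<open>Angles of a triangle\<close>

definition parallelogram_area :: "'a::real_inner \<Rightarrow> 'a \<Rightarrow> 'a \<Rightarrow> real" where
  "parallelogram_area X Y Z =
     sqrt ((norm (Y - X))\<^sup>2 * (norm (Z - X))\<^sup>2 - ((Y - X) \<bullet> (Z - X))\<^sup>2)"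

lemma parallelogram_area_radicand_nonneg:
  "0 \<le> (norm (Y - X))\<^sup>2 * (norm (Z - X))\<^sup>2 - ((Y - X) \<bullet> (Z - X))\<^sup>2"
  using Cauchy_Schwarz_ineq[of "Y - X" "Z - X"] by (simp add: power2_norm_eq_inner)

lemma parallelogram_area_nonneg: "0 \<le> parallelogram_area X Y Z"
  using parallelogram_area_radicand_nonneg by (simp add: parallelogram_area_def)

lemma parallelogram_area_squared:
  "(parallelogram_area X Y Z)\<^sup>2 = (norm (Y - X))\<^sup>2 * (norm (Z - X))\<^sup>2 - ((Y - X) \<bullet> (Z - X))\<^sup>2"
  using parallelogram_area_radicand_nonneg by (simp add: parallelogram_area_def)

lemma parallelogram_area_pos:
  assumes "\<not> collinear {X, Y, Z}"
  shows "0 < parallelogram_area X Y Z"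
proof -
  have "collinear {Y, X, Z} \<longleftrightarrow> collinear {0, Y - X, Z - X}"
    by (rule collinear_3) (simp add: NO_MATCH_def)
  with assms have "\<bar>(Y - X) \<bullet> (Z - X)\<bar> \<noteq> norm (Y - X) * norm (Z - X)"
    by (simp add: norm_cauchy_schwarz_equal insert_commute)
  with Cauchy_Schwarz_ineq2 have "\<bar>(Y - X) \<bullet> (Z - X)\<bar> < norm (Y - X) * norm (Z - X)"
    by (metis order_le_imp_less_or_eq)
  then have "((Y - X) \<bullet> (Z - X))\<^sup>2 < (norm (Y - X) * norm (Z - X))\<^sup>2"
    by (metis abs_ge_zero power2_abs power_strict_mono zero_less_numeral)
  then show ?thesis
    unfolding parallelogram_area_def by (simp add: power_mult_distrib)
qed

lemma parallelogram_area_rotate: "parallelogram_area Y Z X = parallelogram_area X Y Z"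
proof -
  have "(Z - Y) \<bullet> (X - Y) = (Y - X) \<bullet> (Y - X) - (Y - X) \<bullet> (Z - X)"
    and "(Z - Y) \<bullet> (Z - Y) = (Z - X) \<bullet> (Z - X) - 2 * ((Y - X) \<bullet> (Z - X)) + (Y - X) \<bullet> (Y - X)"
    by (simp_all add: algebra_simps inner_commute)
  then show ?thesis
    unfolding parallelogram_area_def power2_norm_eq_inner
    by (simp add: norm_minus_commute inner_commute power2_eq_square algebra_simps)
qed

lemma distinct_if_not_collinear:
  assumes "\<not> collinear {X, Y, Z}"
  shows "X \<noteq> Y" "Y \<noteq> Z" "Z \<noteq> X"
  using assms by (auto simp: insert_commute)

lemma abs_inner_div_norms_le_1: "\<bar>(x \<bullet> y) / (norm x * norm y)\<bar> \<le> 1"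
  using Cauchy_Schwarz_ineq2[of x y] by (auto simp: abs_divide divide_le_eq_1 zero_less_mult_iff)

lemma cos_angle_at:
  assumes "X \<noteq> Y" "X \<noteq> Z"
  shows "cos (angle_at X Y Z) = ((Y - X) \<bullet> (Z - X)) / (dist X Y * dist X Z)"
  using abs_inner_div_norms_le_1[of "Y - X" "Z - X"]
  by (simp add: angle_at_def cos_arccos_abs dist_norm norm_minus_commute)

lemma sin_angle_at:
  assumes "X \<noteq> Y" "X \<noteq> Z"
  shows "sin (angle_at X Y Z) = parallelogram_area X Y Z / (dist X Y * dist X Z)"
proof -
  define r where "r = ((Y - X) \<bullet> (Z - X)) / (norm (Y - X) * norm (Z - X))"
  have nonzero: "norm (Y - X) \<noteq> 0" "norm (Z - X) \<noteq> 0"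
    using assms by simp_all
  have "\<bar>r\<bar> \<le> 1"
    unfolding r_def by (rule abs_inner_div_norms_le_1)
  then have "sin (angle_at X Y Z) = sqrt (1 - r\<^sup>2)"
    unfolding angle_at_def r_def by (simp add: sin_arccos_abs)
  also have "1 - r\<^sup>2 = (parallelogram_area X Y Z / (norm (Y - X) * norm (Z - X)))\<^sup>2"
    unfolding r_def power_divide parallelogram_area_squared using nonzero
    by (simp add: field_simps power_mult_distrib)
  also have "sqrt \<dots> = parallelogram_area X Y Z / (norm (Y - X) * norm (Z - X))"
    using parallelogram_area_nonneg[of X Y Z] by (simp add: real_sqrt_divide)
  finally show ?thesis
    by (simp add: dist_norm norm_minus_commute)
qed

lemma cot_angle_at:
  assumes "X \<noteq> Y" "X \<noteq> Z"
  shows "cot (angle_at X Y Z) = ((Y - X) \<bullet> (Z - X)) / parallelogram_area X Y Z"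
  using assms by (simp add: cot_def cos_angle_at sin_angle_at)

lemma angle_at_bounds:
  assumes "\<not> collinear {X, Y, Z}"
  shows "0 < angle_at X Y Z" "angle_at X Y Z < pi"
proof -
  have "0 < sin (angle_at X Y Z)"
    using assms distinct_if_not_collinear[OF assms]
    by (simp add: sin_angle_at parallelogram_area_pos)
  moreover have "0 \<le> angle_at X Y Z" "angle_at X Y Z \<le> pi"
    using abs_inner_div_norms_le_1[of "Y - X" "Z - X"] unfolding abs_le_iff angle_at_def
    by (auto intro: arccos_lbound arccos_ubound)
  ultimately show "0 < angle_at X Y Z" "angle_at X Y Z < pi"
    by (auto simp: order_le_less)
qed

lemma law_of_sines:
  assumes "\<not> collinear {A, B, C}"
  shows "dist B C * sin (angle_at B C A) = dist C A * sin (angle_at A B C)"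
  using distinct_if_not_collinear[OF assms]
  by (simp add: sin_angle_at parallelogram_area_rotate dist_commute)

lemma sin_angle_at_less_if_opposite_side_less:
  assumes nc: "\<not> collinear {A, B, C}" and "dist C A < dist B C"
  shows "sin (angle_at B C A) < sin (angle_at A B C)"
proof -
  have "0 < sin (angle_at A B C)"
    using angle_at_bounds[OF nc] by (simp add: sin_gt_zero)
  then have "dist B C * sin (angle_at B C A) < dist B C * sin (angle_at A B C)"
    unfolding law_of_sines[OF nc] using assms(2) by simp
  moreover have "0 < dist B C"
    using zero_le_dist[of C A] assms(2) by linarith
  ultimately show ?thesis
    by simp
qed

lemma sin_cos_angle_at_add:
  assumes nc: "\<not> collinear {A, B, C}"
  shows "sin (angle_at A B C + angle_at B C A) = sin (angle_at C A B)"
    "cos (angle_at A B C + angle_at B C A) = - cos (angle_at C A B)"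
proof -
  define U V where "U = B - A" and "V = C - A"
  define S where "S = parallelogram_area A B C"
  define a b c where "a = dist B C" and "b = dist C A" and "c = dist A B"
  note distinct = distinct_if_not_collinear[OF nc]
  have pos: "0 < a" "0 < b" "0 < c"
    using distinct by (simp_all add: a_def b_def c_def)
  have "c = norm U" "b = norm V"
    by (simp_all add: U_def V_def c_def b_def dist_norm norm_minus_commute)
  then have norms: "U \<bullet> U = c\<^sup>2" "V \<bullet> V = b\<^sup>2"
    by (simp_all add: power2_norm_eq_inner)
  have S2: "S\<^sup>2 = c\<^sup>2 * b\<^sup>2 - (U \<bullet> V)\<^sup>2"
    using norms by (simp add: S_def parallelogram_area_squared U_def V_def power2_norm_eq_inner)
  have "S = parallelogram_area B C A" "S = parallelogram_area C A B"
    by (simp_all add: S_def parallelogram_area_rotate)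
  moreover have "C - B = V - U" "A - B = - U" "A - C = - V" "B - C = U - V"
    by (simp_all add: U_def V_def)
  then have "(C - B) \<bullet> (A - B) = c\<^sup>2 - U \<bullet> V" "(A - C) \<bullet> (B - C) = b\<^sup>2 - U \<bullet> V"
    by (simp_all add: inner_diff_left inner_diff_right inner_commute flip: norms)
  ultimately have angles:
    "cos (angle_at A B C) = (U \<bullet> V) / (c * b)" "sin (angle_at A B C) = S / (c * b)"
    "cos (angle_at B C A) = (c\<^sup>2 - U \<bullet> V) / (a * c)" "sin (angle_at B C A) = S / (a * c)"
    "cos (angle_at C A B) = (b\<^sup>2 - U \<bullet> V) / (b * a)" "sin (angle_at C A B) = S / (b * a)"
    using distinct
    by (simp_all add: cos_angle_at sin_angle_at S_def U_def V_def a_def b_def c_def dist_commute)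
  have "sin (angle_at A B C + angle_at B C A) = S * ((c\<^sup>2 - U \<bullet> V) + U \<bullet> V) / (a * b * c\<^sup>2)"
    unfolding sin_add angles using pos by (simp add: field_simps power2_eq_square)
  then show "sin (angle_at A B C + angle_at B C A) = sin (angle_at C A B)"
    unfolding angles using pos by (simp add: field_simps power2_eq_square)
  have "cos (angle_at A B C + angle_at B C A) = ((U \<bullet> V) * (c\<^sup>2 - U \<bullet> V) - S\<^sup>2) / (a * b * c\<^sup>2)"
    unfolding cos_add angles using pos by (simp add: field_simps power2_eq_square)
  also have "\<dots> = - ((b\<^sup>2 - U \<bullet> V) / (b * a))"
    unfolding S2 using pos by (simp add: field_simps power2_eq_square)
  finally show "cos (angle_at A B C + angle_at B C A) = - cos (angle_at C A B)"
    unfolding angles .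
qed

lemma angle_at_sum:
  assumes nc: "\<not> collinear {A, B, C}"
  shows "angle_at A B C + angle_at B C A + angle_at C A B = pi"
proof -
  have "\<not> collinear {B, C, A}" "\<not> collinear {C, A, B}"
    using nc by (simp_all add: insert_commute)
  note bounds = angle_at_bounds[OF nc] angle_at_bounds[OF this(1)] angle_at_bounds[OF this(2)]
  have "angle_at A B C + angle_at B C A = pi - angle_at C A B"
    using bounds by (intro eq_pi_minus_if_sin_cos sin_cos_angle_at_add[OF nc]) linarith+
  then show ?thesis
    by simp
qed

section \<open>Cartesian coordinates along a side\<close>

lemma orthonormal_frame_of_triangle:
  fixes X Y Z :: "'a::real_inner"
  assumes "\<not> collinear {X, Y, Z}"
  obtains e1 e2 where "e1 \<bullet> e1 = 1" "e2 \<bullet> e2 = 1" "e1 \<bullet> e2 = 0"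
    "Y = X + dist X Y *\<^sub>R e1"
    "Z = X + ((Y - X) \<bullet> (Z - X) / dist X Y) *\<^sub>R e1 + (parallelogram_area X Y Z / dist X Y) *\<^sub>R e2"
proof -
  define U V where "U = Y - X" and "V = Z - X"
  define L S d where "L = dist X Y" and "S = parallelogram_area X Y Z" and "d = U \<bullet> V"
  have L: "0 < L" and S: "0 < S"
    using distinct_if_not_collinear[OF assms] parallelogram_area_pos[OF assms]
    by (simp_all add: L_def S_def)
  have "L = norm U"
    by (simp add: U_def L_def dist_norm norm_minus_commute)
  then have UU: "U \<bullet> U = L\<^sup>2"
    by (simp add: power2_norm_eq_inner)
  have S2: "S\<^sup>2 = L\<^sup>2 * (V \<bullet> V) - d\<^sup>2"
    using UU by (simp add: S_def parallelogram_area_squared U_def V_def d_def power2_norm_eq_inner)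
  \<comment> \<open>Gram--Schmidt applied to \<open>U, V\<close>\<close>
  define e1 e2 where "e1 = (1 / L) *\<^sub>R U" and "e2 = (1 / (L * S)) *\<^sub>R (L\<^sup>2 *\<^sub>R V - d *\<^sub>R U)"
  show thesis
  proof
    show "e1 \<bullet> e1 = 1"
      using L by (simp add: e1_def UU power2_eq_square)
    show "e1 \<bullet> e2 = 0"
      using L S by (simp add: e1_def e2_def inner_diff_right UU d_def field_simps power2_eq_square)
    have "e2 \<bullet> e2 = (L\<^sup>2 * (L\<^sup>2 * (V \<bullet> V) - d\<^sup>2)) / (L * S)\<^sup>2"
      by (simp add: e2_def inner_diff_left inner_diff_right UU d_def inner_commute
          power2_eq_square algebra_simps diff_divide_distrib)
    then show "e2 \<bullet> e2 = 1"
      using L S by (simp add: S2[symmetric] power_mult_distrib)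
    show "Y = X + dist X Y *\<^sub>R e1"
      using L by (simp add: e1_def U_def L_def)
    have "(d / L) *\<^sub>R e1 + (S / L) *\<^sub>R e2 = V"
      using L S by (simp add: e1_def e2_def algebra_simps power2_eq_square)
    then show "Z = X + ((Y - X) \<bullet> (Z - X) / dist X Y) *\<^sub>R e1 + (parallelogram_area X Y Z / dist X Y) *\<^sub>R e2"
      unfolding d_def U_def V_def L_def S_def by (simp add: add.assoc eq_diff_eq' [symmetric])
  qed
qed

lemma dist_in_orthonormal_frame:
  fixes e1 e2 :: "'a::real_inner"
  assumes "e1 \<bullet> e1 = 1" "e2 \<bullet> e2 = 1" "e1 \<bullet> e2 = 0"
  shows "(dist (X + x1 *\<^sub>R e1 + y1 *\<^sub>R e2) (X + x2 *\<^sub>R e1 + y2 *\<^sub>R e2))\<^sup>2 = (x1 - x2)\<^sup>2 + (y1 - y2)\<^sup>2"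
proof -
  have "X + x1 *\<^sub>R e1 + y1 *\<^sub>R e2 - (X + x2 *\<^sub>R e1 + y2 *\<^sub>R e2) = (x1 - x2) *\<^sub>R e1 + (y1 - y2) *\<^sub>R e2"
    by (simp add: algebra_simps)
  then have "(dist (X + x1 *\<^sub>R e1 + y1 *\<^sub>R e2) (X + x2 *\<^sub>R e1 + y2 *\<^sub>R e2))\<^sup>2 =
      ((x1 - x2) *\<^sub>R e1 + (y1 - y2) *\<^sub>R e2) \<bullet> ((x1 - x2) *\<^sub>R e1 + (y1 - y2) *\<^sub>R e2)"
    by (simp add: dist_norm power2_norm_eq_inner)
  also have "\<dots> = (x1 - x2)\<^sup>2 + (y1 - y2)\<^sup>2"
    using assms by (simp add: inner_add_left inner_add_right inner_commute power2_eq_square)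
  finally show ?thesis .
qed

lemma dist_eq_abs_if_power2_eq: "(dist P Q)\<^sup>2 = t\<^sup>2 \<Longrightarrow> dist P Q = \<bar>t\<bar>"
  using power2_eq_iff_nonneg[of "dist P Q" "\<bar>t\<bar>"] by simp

lemma closed_segment_in_frame:
  fixes X e :: "'a::real_vector"
  assumes "0 < L"
  shows "P \<in> closed_segment X (X + L *\<^sub>R e) \<longleftrightarrow> (\<exists>x. 0 \<le> x \<and> x \<le> L \<and> P = X + x *\<^sub>R e)"
proof -
  have "(1 - u) *\<^sub>R X + u *\<^sub>R (X + L *\<^sub>R e) = X + (u * L) *\<^sub>R e" for u
    by (simp add: algebra_simps)
  moreover have "(\<exists>u. 0 \<le> u \<and> u \<le> 1 \<and> P = X + (u * L) *\<^sub>R e) \<longleftrightarrow>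
      (\<exists>x. 0 \<le> x \<and> x \<le> L \<and> P = X + x *\<^sub>R e)"
  proof
    assume "\<exists>x. 0 \<le> x \<and> x \<le> L \<and> P = X + x *\<^sub>R e"
    then obtain x where "0 \<le> x" "x \<le> L" "P = X + x *\<^sub>R e"
      by blast
    with assms show "\<exists>u. 0 \<le> u \<and> u \<le> 1 \<and> P = X + (u * L) *\<^sub>R e"
      by (intro exI[of _ "x / L"]) simp
  next
    assume "\<exists>u. 0 \<le> u \<and> u \<le> 1 \<and> P = X + (u * L) *\<^sub>R e"
    then obtain u where "0 \<le> u" "u \<le> 1" "P = X + (u * L) *\<^sub>R e"
      by blast
    with assms show "\<exists>x. 0 \<le> x \<and> x \<le> L \<and> P = X + x *\<^sub>R e"
      by (intro exI[of _ "u * L"]) (simp add: mult_left_le_one_le)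
  qed
  ultimately show ?thesis
    by (simp add: in_segment)
qed

lemma convex_hull_subset_triangle:
  assumes "P \<in> closed_segment X Y" "Q \<in> closed_segment X Y" "R \<in> convex hull {X, Y, Z}"
  shows "convex hull {P, Q, R} \<subseteq> convex hull {X, Y, Z}"
proof -
  have "closed_segment X Y \<subseteq> convex hull {X, Y, Z}"
    unfolding segment_convex_hull by (rule hull_mono) blast
  with assms show ?thesis
    by (intro hull_minimal) (auto simp: convex_convex_hull)
qed

lemma convex_hull_triangle_in_frame:
  fixes X e1 e2 :: "'a::real_vector"
  assumes L: "0 < L" and h: "0 < h"
  shows "P \<in> convex hull {X, X + L *\<^sub>R e1, X + k *\<^sub>R e1 + h *\<^sub>R e2} \<longleftrightarrow>
    (\<exists>x y. P = X + x *\<^sub>R e1 + y *\<^sub>R e2 \<and> 0 \<le> y \<and> y * (k / h) \<le> x \<and> y * ((L - k) / h) \<le> L - x)"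
    (is "_ \<longleftrightarrow> (\<exists>x y. ?frame x y)")
proof -
  have point: "(1 - v - w) *\<^sub>R X + v *\<^sub>R (X + L *\<^sub>R e1) + w *\<^sub>R (X + k *\<^sub>R e1 + h *\<^sub>R e2) =
      X + (v * L + w * k) *\<^sub>R e1 + (w * h) *\<^sub>R e2" for v w
    by (simp add: algebra_simps)
  have coords: "0 \<le> v \<and> 0 \<le> w \<and> v + w \<le> 1 \<longleftrightarrow>
      0 \<le> w * h \<and> (w * h) * (k / h) \<le> v * L + w * k \<and> (w * h) * ((L - k) / h) \<le> L - (v * L + w * k)"
    for v w
  proof -
    have "(w * h) * (k / h) = w * k" "(w * h) * ((L - k) / h) = w * L - w * k"
      using h by (simp_all add: field_simps)
    moreover have "0 \<le> w * h \<longleftrightarrow> 0 \<le> w" "0 \<le> v * L \<longleftrightarrow> 0 \<le> v"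
      using L h by (simp_all add: zero_le_mult_iff)
    moreover have "w * L \<le> L - v * L \<longleftrightarrow> v + w \<le> 1"
      using mult_le_cancel_right_pos[OF L, of "v + w" 1] by (simp add: algebra_simps)
    ultimately show ?thesis
      by auto
  qed
  show ?thesis
  proof
    assume "P \<in> convex hull {X, X + L *\<^sub>R e1, X + k *\<^sub>R e1 + h *\<^sub>R e2}"
    then obtain u v w where "0 \<le> u" "0 \<le> v" "0 \<le> w" "u + v + w = 1"
      and "P = u *\<^sub>R X + v *\<^sub>R (X + L *\<^sub>R e1) + w *\<^sub>R (X + k *\<^sub>R e1 + h *\<^sub>R e2)"
      unfolding convex_hull_3 by blast
    moreover have "u = 1 - v - w"
      using \<open>u + v + w = 1\<close> by simp
    ultimately have "?frame (v * L + w * k) (w * h)"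
      using point[of v w] coords[of v w] by simp
    then show "\<exists>x y. ?frame x y"
      by blast
  next
    assume "\<exists>x y. ?frame x y"
    then obtain x y where frame: "?frame x y"
      by blast
    define w where "w = y / h"
    define v where "v = (x - w * k) / L"
    have "x = v * L + w * k" "y = w * h"
      using L h by (simp_all add: v_def w_def)
    with frame coords[of v w] point[of v w]
    show "P \<in> convex hull {X, X + L *\<^sub>R e1, X + k *\<^sub>R e1 + h *\<^sub>R e2}"
      unfolding convex_hull_3 by (intro CollectI exI[of _ "1 - v - w"] exI[of _ v] exI[of _ w]) auto
  qed
qed

lemma triangle_in_orthonormal_frame:
  fixes X Y Z :: "real^2"
  assumes nc: "\<not> collinear {X, Y, Z}"
  obtains e1 e2 L k h where "e1 \<bullet> e1 = 1" "e2 \<bullet> e2 = 1" "e1 \<bullet> e2 = 0" "0 < L" "0 < h"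
    "L = dist X Y" "Y = X + L *\<^sub>R e1" "Z = X + k *\<^sub>R e1 + h *\<^sub>R e2"
    "k / h = cot (angle_at X Y Z)" "(L - k) / h = cot (angle_at Y Z X)"
proof -
  define L k h where "L = dist X Y" and "k = (Y - X) \<bullet> (Z - X) / dist X Y"
    and "h = parallelogram_area X Y Z / dist X Y"
  note distinct = distinct_if_not_collinear[OF nc]
  have L: "0 < L"
    using distinct by (simp add: L_def)
  have "0 < h"
    using L parallelogram_area_pos[OF nc] by (simp add: L_def h_def)
  have "k / h = cot (angle_at X Y Z)"
    using L distinct by (simp add: k_def h_def L_def cot_angle_at)
  have "(Z - Y) \<bullet> (X - Y) = (Y - X) \<bullet> (Y - X) - (Y - X) \<bullet> (Z - X)"
    by (simp add: algebra_simps inner_commute)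
  also have "(Y - X) \<bullet> (Y - X) = L\<^sup>2"
    by (simp add: L_def dist_norm norm_minus_commute flip: power2_norm_eq_inner)
  also have "L\<^sup>2 - (Y - X) \<bullet> (Z - X) = L * (L - k)"
    using L by (simp add: k_def L_def field_simps power2_eq_square)
  finally have "(L - k) / h = cot (angle_at Y Z X)"
    using L distinct by (simp add: cot_angle_at h_def L_def parallelogram_area_rotate dist_commute)
  moreover obtain e1 e2 where "e1 \<bullet> e1 = 1" "e2 \<bullet> e2 = 1" "e1 \<bullet> e2 = 0"
    "Y = X + L *\<^sub>R e1" "Z = X + k *\<^sub>R e1 + h *\<^sub>R e2"
    using orthonormal_frame_of_triangle[OF nc] unfolding L_def k_def h_def .
  ultimately show thesis
    using that L \<open>0 < h\<close> \<open>k / h = cot (angle_at X Y Z)\<close> L_def by blast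
qed

section \<open>The wedged equilateral triangle on a side\<close>

text \<open>The term 1/2 keeps the base of the equilateral triangle on the side; the term
  sqrt 3 / 2 * cot V keeps its apex inside the angle at the vertex V.\<close>

definition wet_corner_factor :: "real \<Rightarrow> real" where
  "wet_corner_factor t = max (1 / 2) (sqrt 3 / 2 * t)"

lemma wet_corner_factor_ge: "1 / 2 \<le> wet_corner_factor t" "sqrt 3 / 2 * t \<le> wet_corner_factor t"
  by (simp_all add: wet_corner_factor_def)

lemma wet_corner_factor_sum_pos: "0 < wet_corner_factor t1 + wet_corner_factor t2"
  using wet_corner_factor_ge(1)[of t1] wet_corner_factor_ge(1)[of t2] by linarith

lemma mult_wet_corner_factor_le:
  assumes "0 \<le> s" "s / 2 \<le> m" "sqrt 3 / 2 * s * t \<le> m"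
  shows "s * wet_corner_factor t \<le> m"
  using assms by (simp add: wet_corner_factor_def max_def mult.commute mult.left_commute)

lemma equilateral_on_base_bound:
  fixes L p q x y t1 t2 :: real
  assumes base: "0 \<le> p" "p \<le> L" "0 \<le> q" "q \<le> L"
    and apex: "0 \<le> y" "y * t1 \<le> x" "y * t2 \<le> L - x"
    and equilateral: "(x - p)\<^sup>2 + y\<^sup>2 = (q - p)\<^sup>2" "(x - q)\<^sup>2 + y\<^sup>2 = (q - p)\<^sup>2"
  shows "\<bar>q - p\<bar> * (wet_corner_factor t1 + wet_corner_factor t2) \<le> L"
proof (cases "p = q")
  case True
  then show ?thesis
    using base by simp
next
  case False
  define s where "s = \<bar>q - p\<bar>"
  have "(q - p) * (2 * x - p - q) = 0"
    using equilateral by (simp add: algebra_simps power2_eq_square)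
  with False have x: "x = (p + q) / 2"
    by simp
  have "y\<^sup>2 = (sqrt 3 / 2 * s)\<^sup>2"
    using equilateral(1) by (simp add: x s_def power_mult_distrib power2_eq_square field_simps)
  then have y: "y = sqrt 3 / 2 * s"
    using apex(1) by (simp add: s_def power2_eq_iff_nonneg)
  have "s / 2 \<le> x" "s / 2 \<le> L - x"
    using base by (auto simp: s_def x abs_if field_simps)
  moreover have "sqrt 3 / 2 * s * t1 \<le> x" "sqrt 3 / 2 * s * t2 \<le> L - x"
    using apex by (simp_all add: y)
  ultimately have "s * wet_corner_factor t1 \<le> x" "s * wet_corner_factor t2 \<le> L - x"
    by (simp_all add: s_def mult_wet_corner_factor_le)
  then show ?thesis
    by (simp add: s_def distrib_left)
qed

lemma equilateral_on_base_attained: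
  fixes L t1 t2 :: real
  assumes "0 < L"
  obtains p q x y where "0 \<le> p" "p \<le> L" "0 \<le> q" "q \<le> L" "0 \<le> y" "y * t1 \<le> x" "y * t2 \<le> L - x"
    "(x - p)\<^sup>2 + y\<^sup>2 = (q - p)\<^sup>2" "(x - q)\<^sup>2 + y\<^sup>2 = (q - p)\<^sup>2"
    "\<bar>q - p\<bar> = L / (wet_corner_factor t1 + wet_corner_factor t2)"
proof
  define s where "s = L / (wet_corner_factor t1 + wet_corner_factor t2)"
  note factor = wet_corner_factor_ge[of t1] wet_corner_factor_ge[of t2]
  have "0 < s" "s * (wet_corner_factor t1 + wet_corner_factor t2) = L"
    using assms wet_corner_factor_sum_pos[of t1 t2] by (simp_all add: s_def)
  then have s: "0 < s" "s * wet_corner_factor t1 + s * wet_corner_factor t2 = L"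
    by (simp_all add: distrib_left)
  have "s / 2 \<le> s * wet_corner_factor t1" "s / 2 \<le> s * wet_corner_factor t2"
    using s(1) factor by simp_all
  moreover have "sqrt 3 / 2 * s * t1 \<le> s * wet_corner_factor t1"
    "sqrt 3 / 2 * s * t2 \<le> s * wet_corner_factor t2"
    using s(1) factor by (simp_all add: mult.commute mult.left_commute)
  ultimately show "0 \<le> s * wet_corner_factor t1 - s / 2" "s * wet_corner_factor t1 - s / 2 \<le> L"
    "0 \<le> s * wet_corner_factor t1 + s / 2" "s * wet_corner_factor t1 + s / 2 \<le> L"
    "sqrt 3 / 2 * s * t1 \<le> s * wet_corner_factor t1"
    "sqrt 3 / 2 * s * t2 \<le> L - s * wet_corner_factor t1"
    using s by linarith+
  show "0 \<le> sqrt 3 / 2 * s"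
    using s(1) by simp
  show "(s * wet_corner_factor t1 - (s * wet_corner_factor t1 - s / 2))\<^sup>2 + (sqrt 3 / 2 * s)\<^sup>2 =
      (s * wet_corner_factor t1 + s / 2 - (s * wet_corner_factor t1 - s / 2))\<^sup>2"
    "(s * wet_corner_factor t1 - (s * wet_corner_factor t1 + s / 2))\<^sup>2 + (sqrt 3 / 2 * s)\<^sup>2 =
      (s * wet_corner_factor t1 + s / 2 - (s * wet_corner_factor t1 - s / 2))\<^sup>2"
    by (simp_all add: power2_eq_square field_simps)
  show "\<bar>s * wet_corner_factor t1 + s / 2 - (s * wet_corner_factor t1 - s / 2)\<bar> =
      L / (wet_corner_factor t1 + wet_corner_factor t2)"
    using s(1) by (simp add: s_def[symmetric])
qed

lemma equilateral_on_side_bound_in_frame: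
  fixes X e1 e2 P Q R :: "'a::real_inner"
  assumes frame: "e1 \<bullet> e1 = 1" "e2 \<bullet> e2 = 1" "e1 \<bullet> e2 = 0" and L: "0 < L" and h: "0 < h"
    and side: "closed_segment P Q \<subseteq> closed_segment X (X + L *\<^sub>R e1)"
    and hull: "convex hull {P, Q, R} \<subseteq> convex hull {X, X + L *\<^sub>R e1, X + k *\<^sub>R e1 + h *\<^sub>R e2}"
    and equal_sides: "dist P Q = dist Q R" "dist Q R = dist R P"
  shows "dist P Q * (wet_corner_factor (k / h) + wet_corner_factor ((L - k) / h)) \<le> L"
proof -
  have "P \<in> closed_segment X (X + L *\<^sub>R e1)" "Q \<in> closed_segment X (X + L *\<^sub>R e1)"
    and "R \<in> convex hull {X, X + L *\<^sub>R e1, X + k *\<^sub>R e1 + h *\<^sub>R e2}"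
    using side hull by (auto simp: hull_inc)
  then obtain p q x y where p: "0 \<le> p" "p \<le> L" "P = X + p *\<^sub>R e1"
    and q: "0 \<le> q" "q \<le> L" "Q = X + q *\<^sub>R e1" and R: "R = X + x *\<^sub>R e1 + y *\<^sub>R e2"
    and y: "0 \<le> y" "y * (k / h) \<le> x" "y * ((L - k) / h) \<le> L - x"
    unfolding closed_segment_in_frame[OF L] convex_hull_triangle_in_frame[OF L h] by blast
  have "P = X + p *\<^sub>R e1 + 0 *\<^sub>R e2" "Q = X + q *\<^sub>R e1 + 0 *\<^sub>R e2"
    using p(3) q(3) by simp_all
  then have PQ: "(dist P Q)\<^sup>2 = (p - q)\<^sup>2 + (0 - 0)\<^sup>2"
    and QR: "(dist Q R)\<^sup>2 = (q - x)\<^sup>2 + (0 - y)\<^sup>2"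
    and RP: "(dist R P)\<^sup>2 = (x - p)\<^sup>2 + (y - 0)\<^sup>2"
    unfolding R by (simp_all only: dist_in_orthonormal_frame[OF frame])
  then have "dist P Q = \<bar>q - p\<bar>"
    using dist_eq_abs_if_power2_eq[of P Q "q - p"] by (simp add: power2_commute)
  moreover have "(x - p)\<^sup>2 + y\<^sup>2 = (q - p)\<^sup>2" "(x - q)\<^sup>2 + y\<^sup>2 = (q - p)\<^sup>2"
    using equal_sides PQ QR RP by (simp_all add: power2_commute)
  ultimately show ?thesis
    using equilateral_on_base_bound[OF p(1,2) q(1,2) y] by simp
qed

lemma equilateral_on_side_attained_in_frame:
  fixes X e1 e2 :: "'a::real_inner"
  assumes frame: "e1 \<bullet> e1 = 1" "e2 \<bullet> e2 = 1" "e1 \<bullet> e2 = 0" and L: "0 < L" and h: "0 < h"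
  obtains P Q R where "P \<noteq> Q" "dist P Q = dist Q R" "dist Q R = dist R P"
    "closed_segment P Q \<subseteq> closed_segment X (X + L *\<^sub>R e1)"
    "convex hull {P, Q, R} \<subseteq> convex hull {X, X + L *\<^sub>R e1, X + k *\<^sub>R e1 + h *\<^sub>R e2}"
    "dist P Q = L / (wet_corner_factor (k / h) + wet_corner_factor ((L - k) / h))"
proof -
  obtain p q x y where p: "0 \<le> p" "p \<le> L" and q: "0 \<le> q" "q \<le> L"
    and y: "0 \<le> y" "y * (k / h) \<le> x" "y * ((L - k) / h) \<le> L - x"
    and equilateral: "(x - p)\<^sup>2 + y\<^sup>2 = (q - p)\<^sup>2" "(x - q)\<^sup>2 + y\<^sup>2 = (q - p)\<^sup>2"
    and side: "\<bar>q - p\<bar> = L / (wet_corner_factor (k / h) + wet_corner_factor ((L - k) / h))"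
    using equilateral_on_base_attained[OF L] .
  define P Q R where "P = X + p *\<^sub>R e1 + 0 *\<^sub>R e2" and "Q = X + q *\<^sub>R e1 + 0 *\<^sub>R e2"
    and "R = X + x *\<^sub>R e1 + y *\<^sub>R e2"
  have "(dist P Q)\<^sup>2 = (q - p)\<^sup>2" "(dist Q R)\<^sup>2 = (q - p)\<^sup>2" "(dist R P)\<^sup>2 = (q - p)\<^sup>2"
    using equilateral unfolding P_def Q_def R_def dist_in_orthonormal_frame[OF frame]
    by (simp_all add: power2_commute)
  then have dists: "dist P Q = \<bar>q - p\<bar>" "dist Q R = \<bar>q - p\<bar>" "dist R P = \<bar>q - p\<bar>"
    using dist_eq_abs_if_power2_eq by blast+
  have "P \<noteq> Q"
    using L side dists(1) wet_corner_factor_sum_pos[of "k / h" "(L - k) / h"] by auto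
  moreover have PQ: "P \<in> closed_segment X (X + L *\<^sub>R e1)" "Q \<in> closed_segment X (X + L *\<^sub>R e1)"
    using p q by (auto simp: P_def Q_def closed_segment_in_frame[OF L])
  then have "closed_segment P Q \<subseteq> closed_segment X (X + L *\<^sub>R e1)"
    by (intro closed_segment_subset convex_closed_segment)
  moreover have "R \<in> convex hull {X, X + L *\<^sub>R e1, X + k *\<^sub>R e1 + h *\<^sub>R e2}"
    using y unfolding R_def convex_hull_triangle_in_frame[OF L h] by blast
  ultimately show thesis
    using that[of P Q R] convex_hull_subset_triangle[OF PQ] dists side by simp
qed

lemma WET_area_eq:
  fixes X Y Z :: "real^2"
  assumes nc: "\<not> collinear {X, Y, Z}"
  shows "WET_area X Y Z = sqrt 3 / 4 *
    (dist X Y / (wet_corner_factor (cot (angle_at X Y Z)) + wet_corner_factor (cot (angle_at Y Z X))))\<^sup>2"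
proof -
  obtain e1 e2 L k h where frame: "e1 \<bullet> e1 = 1" "e2 \<bullet> e2 = 1" "e1 \<bullet> e2 = 0"
    and L: "0 < L" and h: "0 < h" and "L = dist X Y"
    and Y: "Y = X + L *\<^sub>R e1" and Z: "Z = X + k *\<^sub>R e1 + h *\<^sub>R e2"
    and cots: "k / h = cot (angle_at X Y Z)" "(L - k) / h = cot (angle_at Y Z X)"
    using triangle_in_orthonormal_frame[OF nc] .
  define D where "D = wet_corner_factor (k / h) + wet_corner_factor ((L - k) / h)"
  have "0 < D"
    unfolding D_def by (rule wet_corner_factor_sum_pos)
  let ?T = "{sqrt 3 / 4 * (dist P Q)\<^sup>2 | P Q R. equilateral P Q R \<and>
      closed_segment P Q \<subseteq> closed_segment X Y \<and> convex hull {P, Q, R} \<subseteq> convex hull {X, Y, Z}}"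
  have "t \<le> sqrt 3 / 4 * (L / D)\<^sup>2" if "t \<in> ?T" for t
  proof -
    obtain P Q R where t: "t = sqrt 3 / 4 * (dist P Q)\<^sup>2" and "equilateral P Q R"
      and "closed_segment P Q \<subseteq> closed_segment X Y" and "convex hull {P, Q, R} \<subseteq> convex hull {X, Y, Z}"
      using \<open>t \<in> ?T\<close> by blast
    then have "dist P Q * D \<le> L"
      unfolding D_def equilateral_def Y Z by (blast intro: equilateral_on_side_bound_in_frame[OF frame L h])
    with \<open>0 < D\<close> show ?thesis
      by (simp add: t power_mono pos_le_divide_eq)
  qed
  moreover have "sqrt 3 / 4 * (L / D)\<^sup>2 \<in> ?T"
  proof -
    obtain P Q R where "P \<noteq> Q" "dist P Q = dist Q R" "dist Q R = dist R P"
      "closed_segment P Q \<subseteq> closed_segment X Y" "convex hull {P, Q, R} \<subseteq> convex hull {X, Y, Z}"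
      "dist P Q = L / D"
      using equilateral_on_side_attained_in_frame[OF frame L h, where k = k] unfolding Y Z D_def .
    then show ?thesis
      unfolding equilateral_def by (intro CollectI exI[of _ P] exI[of _ Q] exI[of _ R]) auto
  qed
  ultimately have "WET_area X Y Z = sqrt 3 / 4 * (L / D)\<^sup>2"
    unfolding WET_area_def by (rule cSup_eq_maximum[rotated])
  then show ?thesis
    unfolding D_def cots by (simp only: \<open>L = dist X Y\<close>)
qed

section \<open>Triangles with two angles above 60 degrees\<close>

lemma wet_corner_factor_cot_ge_60:
  assumes "pi / 3 \<le> \<theta>" "\<theta> < pi"
  shows "wet_corner_factor (cot \<theta>) = 1 / 2"
proof -
  have "0 < sin \<theta>"
    using assms by (simp add: sin_gt_zero)
  moreover have "0 \<le> sin (\<theta> - pi / 3)"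
    using assms by (simp add: sin_ge_zero)
  then have "sqrt 3 * cos \<theta> \<le> sin \<theta>"
    by (simp add: sin_diff sin_60 cos_60 mult.commute)
  ultimately have "sqrt 3 / 2 * cot \<theta> \<le> 1 / 2"
    by (simp add: cot_def field_simps)
  then show ?thesis
    by (simp add: wet_corner_factor_def)
qed

lemma wet_corner_factor_cot_le_60:
  assumes "0 < \<theta>" "\<theta> \<le> pi / 3"
  shows "1 / 2 + wet_corner_factor (cot \<theta>) = sin (\<theta> + pi / 3) / sin \<theta>"
proof -
  have "0 < sin \<theta>"
    using assms pi_gt_zero by (simp add: sin_gt_zero)
  moreover have "0 \<le> sin (pi / 3 - \<theta>)"
    using assms by (simp add: sin_ge_zero)
  then have "sin \<theta> \<le> sqrt 3 * cos \<theta>"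
    by (simp add: sin_diff sin_60 cos_60)
  ultimately have "wet_corner_factor (cot \<theta>) = sqrt 3 / 2 * cot \<theta>"
    by (simp add: wet_corner_factor_def cot_def field_simps)
  moreover have "sin (\<theta> + pi / 3) = sin \<theta> / 2 + sqrt 3 / 2 * cos \<theta>"
    by (simp add: sin_add sin_60 cos_60)
  ultimately show ?thesis
    using \<open>0 < sin \<theta>\<close> by (simp add: cot_def field_simps)
qed

lemma WET_areas_proportional_to_sin_sq:
  fixes A B C :: "real^2"
  defines "\<alpha> \<equiv> angle_at A B C" and "\<beta> \<equiv> angle_at B C A"
  assumes nc: "\<not> collinear {A, B, C}" and angles: "pi / 3 < \<alpha>" "pi / 3 < \<beta>"
  obtains k where "0 < k" "WET_area A B C = k * (sin (\<alpha> + \<beta> - pi / 3))\<^sup>2"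
    "WET_area B C A = k * (sin \<alpha>)\<^sup>2" "WET_area C A B = k * (sin \<beta>)\<^sup>2"
proof
  define \<gamma> where "\<gamma> = angle_at C A B"
  define a b c where "a = dist B C" and "b = dist C A" and "c = dist A B"
  define k where "k = sqrt 3 / 4 * (c / sin (\<alpha> + \<beta> - pi / 3))\<^sup>2"
  have nc': "\<not> collinear {B, C, A}" "\<not> collinear {C, A, B}"
    using nc by (simp_all add: insert_commute)
  have \<gamma>: "\<gamma> = pi - \<alpha> - \<beta>"
    using angle_at_sum[OF nc] by (simp add: \<alpha>_def \<beta>_def \<gamma>_def)
  have bounds: "\<alpha> < pi" "\<beta> < pi" "0 < \<gamma>"
    using angle_at_bounds nc nc' by (simp_all add: \<alpha>_def \<beta>_def \<gamma>_def)
  have "\<gamma> + pi / 3 = pi - (\<alpha> + \<beta> - pi / 3)"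
    by (simp add: \<gamma>)
  then have sin_sum: "sin (\<alpha> + \<beta> - pi / 3) = sin (\<gamma> + pi / 3)"
    by (simp only: sin_pi_minus)
  have "0 < sin (\<gamma> + pi / 3)"
    using angles bounds \<gamma> by (intro sin_gt_zero) simp_all
  moreover have "0 < c"
    using distinct_if_not_collinear[OF nc] by (simp add: c_def)
  ultimately show "0 < k"
    by (simp add: k_def sin_sum)
  have corner_\<alpha>\<beta>: "wet_corner_factor (cot \<alpha>) = 1 / 2" "wet_corner_factor (cot \<beta>) = 1 / 2"
    using angles bounds by (simp_all add: wet_corner_factor_cot_ge_60)
  have "1 / 2 + wet_corner_factor (cot \<gamma>) = sin (\<gamma> + pi / 3) / sin \<gamma>"
    using angles bounds \<gamma> by (intro wet_corner_factor_cot_le_60) simp_all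
  with corner_\<alpha>\<beta> have corners_\<gamma>:
    "wet_corner_factor (cot \<beta>) + wet_corner_factor (cot \<gamma>) = sin (\<gamma> + pi / 3) / sin \<gamma>"
    "wet_corner_factor (cot \<gamma>) + wet_corner_factor (cot \<alpha>) = sin (\<gamma> + pi / 3) / sin \<gamma>"
    by simp_all
  have "0 < sin \<gamma>"
    using bounds \<gamma> angles by (intro sin_gt_zero) simp_all
  have sines: "a * sin \<gamma> = c * sin \<alpha>" "b * sin \<gamma> = c * sin \<beta>"
    using law_of_sines[OF nc'(2)] law_of_sines[OF nc'(1)]
    by (simp_all add: a_def b_def c_def \<alpha>_def \<beta>_def \<gamma>_def)
  show "WET_area A B C = k * (sin (\<alpha> + \<beta> - pi / 3))\<^sup>2"
    using \<open>0 < sin (\<gamma> + pi / 3)\<close>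
    by (simp add: WET_area_eq[OF nc] corner_\<alpha>\<beta> k_def c_def sin_sum power_divide
        flip: \<alpha>_def \<beta>_def)
  show "WET_area B C A = k * (sin \<alpha>)\<^sup>2"
    using \<open>0 < sin \<gamma>\<close> sines(1)
    by (simp add: WET_area_eq[OF nc'(1)] corners_\<gamma> k_def sin_sum power_divide
        flip: a_def \<alpha>_def \<beta>_def \<gamma>_def) (simp add: field_simps)
  show "WET_area C A B = k * (sin \<beta>)\<^sup>2"
    using \<open>0 < sin \<gamma>\<close> sines(2)
    by (simp add: WET_area_eq[OF nc'(2)] corners_\<gamma> k_def sin_sum power_divide
        flip: b_def \<alpha>_def \<beta>_def \<gamma>_def) (simp add: field_simps)
qed

lemma WET_area_order:
  fixes A B C :: "real^2"
  defines "\<alpha> \<equiv> angle_at A B C" and "\<beta> \<equiv> angle_at B C A"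
  assumes nc: "\<not> collinear {A, B, C}"
    and angles: "pi / 3 < \<alpha>" "\<alpha> < pi / 2" "pi / 3 < \<beta>" "\<beta> < pi / 2"
  shows "WET_area C A B < WET_area B C A \<longleftrightarrow> \<beta> < \<alpha>"
    "WET_area C A B < WET_area A B C \<longleftrightarrow> \<alpha> + 2 * \<beta> < 4 * pi / 3"
    "WET_area A B C < WET_area C A B \<longleftrightarrow> 4 * pi / 3 < \<alpha> + 2 * \<beta>"
    "WET_area A B C = WET_area C A B \<longleftrightarrow> \<alpha> + 2 * \<beta> = 4 * pi / 3"
    "WET_area A B C < WET_area B C A \<longleftrightarrow> 4 * pi / 3 < 2 * \<alpha> + \<beta>"
    "WET_area B C A = WET_area A B C \<longleftrightarrow> 2 * \<alpha> + \<beta> = 4 * pi / 3"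
proof -
  obtain k where "0 < k" and areas: "WET_area A B C = k * (sin (\<alpha> + \<beta> - pi / 3))\<^sup>2"
    "WET_area B C A = k * (sin \<alpha>)\<^sup>2" "WET_area C A B = k * (sin \<beta>)\<^sup>2"
    using WET_areas_proportional_to_sin_sq[OF nc] angles unfolding \<alpha>_def \<beta>_def by blast
  define \<theta> where "\<theta> = \<alpha> + \<beta> - pi / 3"
  have ranges: "0 \<le> \<alpha>" "\<alpha> \<le> pi" "0 \<le> \<beta>" "\<beta> \<le> pi" "0 \<le> \<theta>" "\<theta> \<le> pi"
    using angles by (simp_all add: \<theta>_def)
  have distances: "\<bar>\<alpha> - pi / 2\<bar> = pi / 2 - \<alpha>" "\<bar>\<beta> - pi / 2\<bar> = pi / 2 - \<beta>"
    "\<bar>\<theta> - pi / 2\<bar> < pi / 2 - \<beta> \<longleftrightarrow> \<alpha> + 2 * \<beta> < 4 * pi / 3"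
    "pi / 2 - \<beta> < \<bar>\<theta> - pi / 2\<bar> \<longleftrightarrow> 4 * pi / 3 < \<alpha> + 2 * \<beta>"
    "\<bar>\<theta> - pi / 2\<bar> = pi / 2 - \<beta> \<longleftrightarrow> \<alpha> + 2 * \<beta> = 4 * pi / 3"
    "pi / 2 - \<alpha> < \<bar>\<theta> - pi / 2\<bar> \<longleftrightarrow> 4 * pi / 3 < 2 * \<alpha> + \<beta>"
    "pi / 2 - \<alpha> = \<bar>\<theta> - pi / 2\<bar> \<longleftrightarrow> 2 * \<alpha> + \<beta> = 4 * pi / 3"
    using angles by (auto simp: \<theta>_def abs_if)
  show "WET_area C A B < WET_area B C A \<longleftrightarrow> \<beta> < \<alpha>"
    "WET_area C A B < WET_area A B C \<longleftrightarrow> \<alpha> + 2 * \<beta> < 4 * pi / 3"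
    "WET_area A B C < WET_area C A B \<longleftrightarrow> 4 * pi / 3 < \<alpha> + 2 * \<beta>"
    "WET_area A B C = WET_area C A B \<longleftrightarrow> \<alpha> + 2 * \<beta> = 4 * pi / 3"
    "WET_area A B C < WET_area B C A \<longleftrightarrow> 4 * pi / 3 < 2 * \<alpha> + \<beta>"
    "WET_area B C A = WET_area A B C \<longleftrightarrow> 2 * \<alpha> + \<beta> = 4 * pi / 3"
    unfolding areas \<theta>_def[symmetric] using \<open>0 < k\<close> ranges
    by (simp_all add: sin_sq_less_sin_sq_iff sin_sq_eq_sin_sq_iff distances)
qed

theorem mainTheorem3:
  fixes A B C :: "real^2"
  defines "a \<equiv> dist B C" and "b \<equiv> dist C A" and "c \<equiv> dist A B"
  defines "\<alpha> \<equiv> angle_at A B C" and "\<beta> \<equiv> angle_at B C A" and "\<gamma> \<equiv> angle_at C A B"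
  defines "Wa \<equiv> WET_area B C A" and "Wb \<equiv> WET_area C A B" and "Wc \<equiv> WET_area A B C"
  assumes noncollinear: "\<not> collinear {A, B, C}"
  assumes sides: "a > b" "b > c"
  shows
   "(deg 60 < \<beta> \<and> \<beta> < deg 80 \<and> deg 80 < \<alpha> \<and> \<alpha> < deg 90 \<and>
     \<alpha> / 2 + \<beta> < deg 120 \<and> \<alpha> + \<beta> / 2 \<ge> deg 120 \<longrightarrow>
       Wb < Wa \<and> Wb < Wc \<and>
       (\<alpha> + \<beta> / 2 = deg 120 \<longrightarrow> Wa = Wc) \<and>
       (\<alpha> + \<beta> / 2 > deg 120 \<longrightarrow> Wa > Wc))
  \<and> (deg 75 < \<beta> \<and> \<beta> < deg 90 \<and> deg 80 < \<alpha> \<and> \<alpha> < deg 90 \<and>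
     \<alpha> / 2 + \<beta> \<ge> deg 120 \<longrightarrow>
       Wa > Wb \<and> Wa > Wc \<and>
       (\<alpha> / 2 + \<beta> > deg 120 \<longrightarrow> Wc < Wb) \<and>
       (\<alpha> / 2 + \<beta> = deg 120 \<longrightarrow> Wc = Wb))"
proof -
  have "sin \<beta> < sin \<alpha>"
    using sin_angle_at_less_if_opposite_side_less[OF noncollinear] sides(1)
    unfolding a_def b_def \<alpha>_def \<beta>_def by blast
  \<comment> \<open>outside these ranges both parts are vacuous\<close>
  show ?thesis
  proof (cases "pi / 3 < \<alpha> \<and> \<alpha> < pi / 2 \<and> pi / 3 < \<beta> \<and> \<beta> < pi / 2")
    case True
    with \<open>sin \<beta> < sin \<alpha>\<close> have "\<beta> < \<alpha>"
      using sin_less_sin_iff_dist_pi_half[of \<beta> \<alpha>] by simp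
    moreover note WET_area_order[OF noncollinear, folded \<alpha>_def \<beta>_def Wa_def Wb_def Wc_def]
    ultimately show ?thesis
      using True unfolding deg_def by auto
  next
    case False
    then show ?thesis
      unfolding deg_def by auto
  qed
qed

end
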